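(* Let $X$ be a real reflexive Banach space, $T:X\rightrightarrows X^{\ast}$ maximally monotone, and $h\in\mathcal{H}(T)$. Then $\breve{T}_h$ is additive. Moreover, $\breve{T}_h$ is maximally additive if and only if $(\mathcal{A}h)^{\ast}\circ i=\mathcal{A}h$. Consequently, if $h^{\ast}\circ i=h$ then $\breve{T}_h$ is maximally additive.
   Context: $X^{\ast}$ is the dual of $X$ with pairing $\langle\cdot,\cdot\rangle$. The dual of $X\times X^{\ast}$ is identified with $X^{\ast}\times X$ via $\langle (x,x^{\ast}),(y^{\ast},y)\rangle=\langle x,y^{\ast}\rangle+\langle y,x^{\ast}\rangle$; for $g:X\times X^{\ast}\to\mathbb{R}\cup\{+\infty\}$, $g^{\ast}(y^{\ast},y)=\sup_{(x,x^{\ast})}\{\langle x,y^{\ast}\rangle+\langle y,x^{\ast}\rangle-g(x,x^{\ast})\}$, and $i(x,x^{\ast})=(x^{\ast},x)$. $\mathcal{H}(T)$ is the family of lower semicontinuous convex $h:X\times X^{\ast}\to\mathbb{R}\cup\{+\infty\}$ with $h(x,x^{\ast})\ge\langle x,x^{\ast}\rangle$ everywhere and equality whenever $x^{\ast}\in T(x)$. $\mathcal{A}h:=\tfrac12(h+h^{\ast}\circ i)$. For $\eta\ge0$, $\partial_\eta h(z)$ is the set of $(y^{\ast},y)\in X^{\ast}\times X$ with $h(w,w^{\ast})\ge h(z)+\langle (w,w^{\ast})-z,(y^{\ast},y)\rangle-\eta$ for all $(w,w^{\ast})$ when $h(z)<\infty$, and $\emptyset$ otherwise; $\breve{T}_h(\epsilon,x):=\{x^{\ast}:(x^{\ast},x)\in\partial_{2\epsilon}h(x,x^{\ast})\}$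 for $\epsilon\ge0$. For $g\in\mathcal{H}(T)$, $L^{g}(\epsilon,x)=\{x^{\ast}:g(x,x^{\ast})\le\langle x,x^{\ast}\rangle+\epsilon\}$; the family $\mathbb{E}(T)$ of enlargements of $T$ consists exactly of the maps $L^g$, $g\in\mathcal{H}(T)$ (each with a unique $g$). An enlargement $E$ is additive if $\langle x-y,x^{\ast}-y^{\ast}\rangle\ge-(\epsilon_1+\epsilon_2)$ whenever $x^{\ast}\in E(\epsilon_1,x)$, $y^{\ast}\in E(\epsilon_2,y)$. An additive $E\in\mathbb{E}(T)$ is maximally additive if whenever $E'\in\mathbb{E}(T)$ is additive and $E(\epsilon,x)\subset E'(\epsilon,x)$ for all $\epsilon\ge0$, $x\in X$, then $E=E'$. *)

theory Defs
  imports "HOL-Analysis.Analysis"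
begin

text \<open>The dual X* of a real Banach space X is rendered as the type of bounded linear
functionals on X with values in real; the pairing of x and xs is xs applied to x.\<close>

definition pair :: "'a::real_normed_vector \<Rightarrow> ('a \<Rightarrow>\<^sub>L real) \<Rightarrow> real" where
  "pair x xs = blinfun_apply xs x"

definition reflexive_space :: "'a::real_normed_vector itself \<Rightarrow> bool" where
  "reflexive_space _ \<longleftrightarrow>
     (\<forall>\<phi> :: ('a \<Rightarrow>\<^sub>L real) \<Rightarrow>\<^sub>L real. \<exists>x::'a. \<forall>f. blinfun_apply \<phi> f = blinfun_apply f x)"

definition monotone_op :: "('a::real_normed_vector \<Rightarrow> ('a \<Rightarrow>\<^sub>L real) set) \<Rightarrow> bool" where
  "monotone_op T \<longleftrightarrow>
     (\<forall>x y xs ys. xs \<in> T x \<longrightarrow> ys \<in> T y \<longrightarrow> pair (x - y) (xs - ys) \<ge> 0)"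

definition maximal_monotone :: "('a::real_normed_vector \<Rightarrow> ('a \<Rightarrow>\<^sub>L real) set) \<Rightarrow> bool" where
  "maximal_monotone T \<longleftrightarrow> monotone_op T \<and>
     (\<forall>S. monotone_op S \<and> (\<forall>x. T x \<subseteq> S x) \<longrightarrow> S = T)"

definition ext_convex :: "('v::real_vector \<Rightarrow> ereal) \<Rightarrow> bool" where
  "ext_convex f \<longleftrightarrow> (\<forall>u v t. 0 \<le> t \<and> t \<le> 1 \<longrightarrow>
      f ((1 - t) *\<^sub>R u + t *\<^sub>R v) \<le> ereal (1 - t) * f u + ereal t * f v)"

definition ext_lsc :: "('v::topological_space \<Rightarrow> ereal) \<Rightarrow> bool" where
  "ext_lsc f \<longleftrightarrow> (\<forall>c. closed {z. f z \<le> c})"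

definition fitz_family :: "('a::real_normed_vector \<Rightarrow> ('a \<Rightarrow>\<^sub>L real) set)
    \<Rightarrow> ('a \<times> ('a \<Rightarrow>\<^sub>L real) \<Rightarrow> ereal) set" where
  "fitz_family T = {h. (\<forall>z. h z \<noteq> -\<infinity>) \<and> ext_convex h \<and> ext_lsc h \<and>
      (\<forall>x xs. h (x, xs) \<ge> ereal (pair x xs)) \<and>
      (\<forall>x xs. xs \<in> T x \<longrightarrow> h (x, xs) = ereal (pair x xs))}"

definition fenchel_conj :: "('a::real_normed_vector \<times> ('a \<Rightarrow>\<^sub>L real) \<Rightarrow> ereal)
    \<Rightarrow> ('a \<Rightarrow>\<^sub>L real) \<times> 'a \<Rightarrow> ereal" where
  "fenchel_conj g = (\<lambda>(ys, y). SUP z. ereal (pair (fst z) ys + pair y (snd z)) - g z)"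

definition iswap :: "'a \<times> 'b \<Rightarrow> 'b \<times> 'a" where
  "iswap z = (snd z, fst z)"

definition avg_op :: "('a::real_normed_vector \<times> ('a \<Rightarrow>\<^sub>L real) \<Rightarrow> ereal)
    \<Rightarrow> 'a \<times> ('a \<Rightarrow>\<^sub>L real) \<Rightarrow> ereal" where
  "avg_op h = (\<lambda>z. (h z + (fenchel_conj h \<circ> iswap) z) / 2)"

definition eps_subdiff :: "real \<Rightarrow> ('a::real_normed_vector \<times> ('a \<Rightarrow>\<^sub>L real) \<Rightarrow> ereal)
    \<Rightarrow> 'a \<times> ('a \<Rightarrow>\<^sub>L real) \<Rightarrow> (('a \<Rightarrow>\<^sub>L real) \<times> 'a) set" where
  "eps_subdiff \<eta> h z = (if h z < \<infinity> then
     {(ys, y). \<forall>w. h w \<ge> h z + ereal (pair (fst w - fst z) ys + pair y (snd w - snd z)) - ereal \<eta>}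
     else {})"

definition breve :: "('a::real_normed_vector \<times> ('a \<Rightarrow>\<^sub>L real) \<Rightarrow> ereal)
    \<Rightarrow> real \<Rightarrow> 'a \<Rightarrow> ('a \<Rightarrow>\<^sub>L real) set" where
  "breve h \<epsilon> x = {xs. (xs, x) \<in> eps_subdiff (2 * \<epsilon>) h (x, xs)}"

definition Lenl :: "('a::real_normed_vector \<times> ('a \<Rightarrow>\<^sub>L real) \<Rightarrow> ereal)
    \<Rightarrow> real \<Rightarrow> 'a \<Rightarrow> ('a \<Rightarrow>\<^sub>L real) set" where
  "Lenl g \<epsilon> x = {xs. g (x, xs) \<le> ereal (pair x xs + \<epsilon>)}"

definition is_enlargement :: "('a::real_normed_vector \<Rightarrow> ('a \<Rightarrow>\<^sub>L real) set)
    \<Rightarrow> (real \<Rightarrow> 'a \<Rightarrow> ('a \<Rightarrow>\<^sub>L real) set) \<Rightarrow> bool" where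
  "is_enlargement T E \<longleftrightarrow> (\<exists>g \<in> fitz_family T. \<forall>\<epsilon> \<ge> 0. \<forall>x. E \<epsilon> x = Lenl g \<epsilon> x)"

definition additive_enl :: "(real \<Rightarrow> 'a::real_normed_vector \<Rightarrow> ('a \<Rightarrow>\<^sub>L real) set) \<Rightarrow> bool" where
  "additive_enl E \<longleftrightarrow> (\<forall>e1 e2 x y xs ys. e1 \<ge> 0 \<longrightarrow> e2 \<ge> 0 \<longrightarrow>
      xs \<in> E e1 x \<longrightarrow> ys \<in> E e2 y \<longrightarrow> pair (x - y) (xs - ys) \<ge> - (e1 + e2))"

definition max_additive :: "('a::real_normed_vector \<Rightarrow> ('a \<Rightarrow>\<^sub>L real) set)
    \<Rightarrow> (real \<Rightarrow> 'a \<Rightarrow> ('a \<Rightarrow>\<^sub>L real) set) \<Rightarrow> bool" where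
  "max_additive T E \<longleftrightarrow> is_enlargement T E \<and> additive_enl E \<and>
     (\<forall>E'. is_enlargement T E' \<and> additive_enl E' \<and> (\<forall>\<epsilon> \<ge> 0. \<forall>x. E \<epsilon> x \<subseteq> E' \<epsilon> x)
        \<longrightarrow> (\<forall>\<epsilon> \<ge> 0. \<forall>x. E \<epsilon> x = E' \<epsilon> x))"

end

theory Submission
  imports Defs
begin

text \<open>Put \<open>g := \<A>h\<close>.  Unfolding the \<open>2\<epsilon>\<close>-subdifferential shows \<open>breve h = L\<^sup>g\<close>, and adding the
  Fenchel-Young inequalities for \<open>h\<close> at \<open>w\<close> and at \<open>z\<close> shows \<open>g\<^sup>* \<circ> i \<le> g\<close>; this domination alone
  makes \<open>L\<^sup>g\<close> additive.  If \<open>g\<^sup>* \<circ> i = g\<close>, additivity of any enlargement \<open>E' \<supseteq> L\<^sup>g\<close> against the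
  points of \<open>L\<^sup>g\<close> gives \<open>E' \<subseteq> L\<^bsup>g\<^sup>* \<circ> i\<^esup> = L\<^sup>g\<close>.  Conversely, if \<open>g\<^sup>*(i z\<^sub>0) < g z\<^sub>0\<close>, lowering
  \<open>g\<close> at \<open>z\<^sub>0\<close> to \<open>g\<^sup>*(i z\<^sub>0)\<close> keeps the domination, and the biconjugate of the result is a
  strictly smaller member of \<open>\<H>(T)\<close> that still dominates its conjugate, so \<open>L\<^sup>g\<close> is not maximal.
  Maximal monotonicity of \<open>T\<close> is what keeps these conjugates above the duality product.\<close>

text \<open>\<open>coupling w z\<close> is the pairing \<open>\<langle>w, i z\<rangle>\<close> of \<open>X \<times> X\<^sup>*\<close> with its dual \<open>X\<^sup>* \<times> X\<close>.\<close>

definition coupling :: "'a::real_normed_vector \<times> ('a \<Rightarrow>\<^sub>L real) \<Rightarrow> 'a \<times> ('a \<Rightarrow>\<^sub>L real) \<Rightarrow> real" where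
  "coupling w z = pair (fst w) (snd z) + pair (fst z) (snd w)"

definition self_pair :: "'a::real_normed_vector \<times> ('a \<Rightarrow>\<^sub>L real) \<Rightarrow> real" where
  "self_pair z = pair (fst z) (snd z)"

definition swapped_conj :: "('a::real_normed_vector \<times> ('a \<Rightarrow>\<^sub>L real) \<Rightarrow> ereal)
    \<Rightarrow> 'a \<times> ('a \<Rightarrow>\<^sub>L real) \<Rightarrow> ereal" where
  "swapped_conj f = fenchel_conj f \<circ> iswap"

lemmas pair_simps = pair_def blinfun.bilinear_simps

lemma coupling_commute: "coupling w z = coupling z w"
  by (simp add: coupling_def)

lemma coupling_self: "coupling z z = 2 * self_pair z"
  by (simp add: coupling_def self_pair_def)

lemma pair_diff_diff:
  "pair (x - y) (xs - ys) = self_pair (x, xs) + self_pair (y, ys) - coupling (x, xs) (y, ys)"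
  by (simp add: self_pair_def coupling_def pair_simps)

lemma coupling_convex_comb:
  "coupling w ((1 - t) *\<^sub>R u + t *\<^sub>R v) = (1 - t) * coupling w u + t * coupling w v"
  by (simp add: coupling_def pair_simps algebra_simps)

lemma self_pair_convex_comb:
  "self_pair ((1 - t) *\<^sub>R u + t *\<^sub>R v) = (1 - t)\<^sup>2 * self_pair u + t\<^sup>2 * self_pair v + t * (1 - t) * coupling u v"
  by (simp add: self_pair_def coupling_def pair_simps algebra_simps power2_eq_square)

lemma continuous_on_coupling: "continuous_on UNIV (coupling w)"
  unfolding coupling_def pair_def by (intro continuous_intros)

lemma ext_convexD_real:
  assumes "ext_convex f" "0 \<le> t" "t \<le> 1" "f u \<le> ereal a" "f v \<le> ereal b"
  shows "f ((1 - t) *\<^sub>R u + t *\<^sub>R v) \<le> ereal ((1 - t) * a + t * b)"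
proof -
  have "f ((1 - t) *\<^sub>R u + t *\<^sub>R v) \<le> ereal (1 - t) * f u + ereal t * f v"
    using assms(1-3) unfolding ext_convex_def by blast
  also have "\<dots> \<le> ereal (1 - t) * ereal a + ereal t * ereal b"
    using assms by (intro add_mono ereal_mult_left_mono) auto
  finally show ?thesis by simp
qed

lemma ext_convexI_real:
  assumes not_minf: "\<And>z. f z \<noteq> -\<infinity>"
    and real_comb: "\<And>u v t a b. 0 < t \<Longrightarrow> t < 1 \<Longrightarrow> f u = ereal a \<Longrightarrow> f v = ereal b \<Longrightarrow>
       f ((1 - t) *\<^sub>R u + t *\<^sub>R v) \<le> ereal ((1 - t) * a + t * b)"
  shows "ext_convex f"
  unfolding ext_convex_def
proof (intro allI impI)
  fix u v and t :: real
  assume t: "0 \<le> t \<and> t \<le> 1"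
  consider "t = 0" | "t = 1" | "0 < t" "t < 1" using t by fastforce
  then show "f ((1 - t) *\<^sub>R u + t *\<^sub>R v) \<le> ereal (1 - t) * f u + ereal t * f v"
  proof cases
    case 3
    show ?thesis
    proof (cases "f u = \<infinity> \<or> f v = \<infinity>")
      case True
      then show ?thesis using 3 not_minf[of u] not_minf[of v]
        by (cases "f u"; cases "f v") (auto simp: ereal_mult_infty)
    next
      case False
      then obtain a b where "f u = ereal a" "f v = ereal b"
        using not_minf[of u] not_minf[of v] by (cases "f u"; cases "f v") auto
      then show ?thesis using real_comb[of t u a v b] 3 by simp
    qed
  qed (simp_all add: zero_ereal_def[symmetric])
qed

lemma ext_lscI_real:
  assumes "\<And>r. closed {z. f z \<le> ereal r}"
  shows "ext_lsc f"
  unfolding ext_lsc_def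
proof
  fix c :: ereal
  show "closed {z. f z \<le> c}"
  proof (cases c)
    case MInf
    have "{z. f z \<le> c} = (\<Inter>r. {z. f z \<le> ereal r})"
      by (auto simp: MInf intro: ereal_bot)
    then show ?thesis using assms by auto
  qed (use assms in auto)
qed

lemma ext_lsc_open_superlevel:
  assumes "ext_lsc f" shows "open {z. c < f z}"
proof -
  have "{z. c < f z} = - {z. f z \<le> c}" by auto
  then show ?thesis using assms by (simp add: ext_lsc_def open_Compl)
qed

lemma ereal_less_add_split:
  assumes "ereal s < A + B" "A \<noteq> -\<infinity>" "B \<noteq> -\<infinity>"
  obtains a b where "ereal a < A" "ereal b < B" "a + b = s"
proof (cases A; cases B)
  fix a b assume ab: "A = ereal a" "B = ereal b"
  then have "a + b - s > 0" using assms by simp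
  with ab show thesis
    by (intro that[of "a - (a + b - s) / 2" "s - (a - (a + b - s) / 2)"]) (auto simp: field_simps)
next
  fix a assume "A = ereal a" "B = \<infinity>"
  then show thesis by (intro that[of "a - 1" "s - (a - 1)"]) auto
next
  fix b assume "A = \<infinity>" "B = ereal b"
  then show thesis by (intro that[of "s - (b - 1)" "b - 1"]) auto
next
  assume "A = \<infinity>" "B = \<infinity>"
  then show thesis by (intro that[of 0 s]) auto
qed (use assms in auto)

lemma half_sum_le_ereal_iff:
  "A \<noteq> -\<infinity> \<Longrightarrow> B \<noteq> -\<infinity> \<Longrightarrow> (A + B) / 2 \<le> ereal r \<longleftrightarrow> A + B \<le> ereal (2 * r)"
  by (cases A; cases B) auto

lemma ext_convex_half_sum:
  assumes f: "ext_convex f" "\<And>z. f z \<noteq> -\<infinity>" and g: "ext_convex g" "\<And>z. g z \<noteq> -\<infinity>"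
  shows "ext_convex (\<lambda>z. (f z + g z) / 2)"
proof (rule ext_convexI_real)
  show "(f z + g z) / 2 \<noteq> -\<infinity>" for z
    using f(2)[of z] g(2)[of z] by (cases "f z"; cases "g z") auto
next
  fix u v and t a b :: real
  assume t: "0 < t" "t < 1" and a: "(f u + g u) / 2 = ereal a" and b: "(f v + g v) / 2 = ereal b"
  obtain a1 a2 where a12: "f u = ereal a1" "g u = ereal a2"
    using a f(2)[of u] g(2)[of u] by (cases "f u"; cases "g u") auto
  obtain b1 b2 where b12: "f v = ereal b1" "g v = ereal b2"
    using b f(2)[of v] g(2)[of v] by (cases "f v"; cases "g v") auto
  have sums: "a1 + a2 = 2 * a" "b1 + b2 = 2 * b" using a b a12 b12 by auto
  have "f ((1 - t) *\<^sub>R u + t *\<^sub>R v) + g ((1 - t) *\<^sub>R u + t *\<^sub>R v)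
      \<le> ereal ((1 - t) * a1 + t * b1) + ereal ((1 - t) * a2 + t * b2)"
    using t a12 b12 by (intro add_mono ext_convexD_real[OF f(1)] ext_convexD_real[OF g(1)]) auto
  also have "\<dots> = ereal ((1 - t) * (a1 + a2) + t * (b1 + b2))"
    by (simp add: algebra_simps)
  also have "\<dots> = ereal (2 * ((1 - t) * a + t * b))"
    by (simp only: sums) (simp add: algebra_simps)
  finally show "(f ((1 - t) *\<^sub>R u + t *\<^sub>R v) + g ((1 - t) *\<^sub>R u + t *\<^sub>R v)) / 2
      \<le> ereal ((1 - t) * a + t * b)"
    using half_sum_le_ereal_iff f(2) g(2) by blast
qed

lemma ext_lsc_half_sum:
  assumes f: "ext_lsc f" "\<And>z. f z \<noteq> -\<infinity>" and g: "ext_lsc g" "\<And>z. g z \<noteq> -\<infinity>"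
  shows "ext_lsc (\<lambda>z. (f z + g z) / 2)"
proof (rule ext_lscI_real)
  fix r
  let ?S = "{z. ereal (2 * r) < f z + g z}"
  have "open ?S"
  proof (subst open_subopen, intro ballI)
    fix z assume "z \<in> ?S"
    then obtain a b where ab: "ereal a < f z" "ereal b < g z" "a + b = 2 * r"
      using ereal_less_add_split f(2) g(2) by blast
    let ?U = "{w. ereal a < f w} \<inter> {w. ereal b < g w}"
    have "open ?U" by (intro open_Int ext_lsc_open_superlevel f(1) g(1))
    moreover have "?U \<subseteq> ?S"
      using ab(3) ereal_add_strict_mono2[of "ereal a" _ "ereal b"] by fastforce
    ultimately show "\<exists>U. open U \<and> z \<in> U \<and> U \<subseteq> ?S" using ab by blast
  qed
  moreover have "{z. (f z + g z) / 2 \<le> ereal r} = - ?S"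
    using half_sum_le_ereal_iff[OF f(2) g(2)] by (auto simp: not_less)
  ultimately show "closed {z. (f z + g z) / 2 \<le> ereal r}" by (simp add: closed_def)
qed

lemma le_of_forall_small_perturbation:
  fixes A K H :: real
  assumes "\<And>t. 0 < t \<Longrightarrow> t \<le> 1 \<Longrightarrow> A + t * K \<le> H"
  shows "A \<le> H"
proof -
  have "((\<lambda>t. A + t * K) \<longlongrightarrow> A + 0 * K) (at_right 0)"
    by (intro tendsto_intros)
  moreover have "eventually (\<lambda>t. A + t * K \<le> H) (at_right (0::real))"
    unfolding eventually_at_right_field using assms by (intro exI[of _ 1]) auto
  ultimately show ?thesis
    by (simp add: tendsto_upperbound)
qed

subsection \<open>The conjugate \<open>f\<^sup>* \<circ> i\<close>\<close>

lemma swapped_conj_eq_SUP: "swapped_conj f z = (SUP w. ereal (coupling w z) - f w)"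
  by (cases z) (simp add: swapped_conj_def fenchel_conj_def iswap_def coupling_def)

lemma fenchel_young: "ereal (coupling w z) - f w \<le> swapped_conj f z"
  unfolding swapped_conj_eq_SUP by (rule SUP_upper) simp

lemma swapped_conj_leI: "(\<And>w. ereal (coupling w z) - f w \<le> c) \<Longrightarrow> swapped_conj f z \<le> c"
  unfolding swapped_conj_eq_SUP by (rule SUP_least)

lemma swapped_conj_le_iff: "swapped_conj f z \<le> c \<longleftrightarrow> (\<forall>w. ereal (coupling w z) - f w \<le> c)"
  unfolding swapped_conj_eq_SUP by (simp add: SUP_le_iff)

lemma swapped_conj_antimono: "(\<And>z. f z \<le> g z) \<Longrightarrow> swapped_conj g z \<le> swapped_conj f z"
  unfolding swapped_conj_eq_SUP by (intro SUP_mono) (metis ereal_minus_mono order_refl)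

lemma ereal_diff_le_swap: "ereal b - F \<le> C \<Longrightarrow> ereal b - C \<le> F"
  by (cases F; cases C) auto

lemma fenchel_young_swap: "ereal (coupling w z) - swapped_conj f w \<le> f z"
  using fenchel_young[of z w f] by (simp add: coupling_commute ereal_diff_le_swap)

lemma swapped_biconj_le: "swapped_conj (swapped_conj f) z \<le> f z"
  by (rule swapped_conj_leI) (rule fenchel_young_swap)

lemma swapped_conj_convex:
  assumes not_minf: "\<And>z. f z \<noteq> -\<infinity>"
  shows "ext_convex (swapped_conj f)"
  unfolding ext_convex_def
proof (intro allI impI)
  fix u v and t :: real
  assume t: "0 \<le> t \<and> t \<le> 1"
  show "swapped_conj f ((1 - t) *\<^sub>R u + t *\<^sub>R v)
      \<le> ereal (1 - t) * swapped_conj f u + ereal t * swapped_conj f v"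
  proof (rule swapped_conj_leI)
    fix w
    show "ereal (coupling w ((1 - t) *\<^sub>R u + t *\<^sub>R v)) - f w
        \<le> ereal (1 - t) * swapped_conj f u + ereal t * swapped_conj f v"
    proof (cases "f w")
      case (real F)
      have "ereal (coupling w ((1 - t) *\<^sub>R u + t *\<^sub>R v)) - f w
          = ereal (1 - t) * ereal (coupling w u - F) + ereal t * ereal (coupling w v - F)"
        using real by (simp only: coupling_convex_comb) (simp add: algebra_simps)
      also have "\<dots> \<le> ereal (1 - t) * swapped_conj f u + ereal t * swapped_conj f v"
        using t fenchel_young[of w u f] fenchel_young[of w v f] real
        by (intro add_mono ereal_mult_left_mono) auto
      finally show ?thesis .
    qed (use not_minf[of w] in auto)
  qed
qed

lemma swapped_conj_lsc: "ext_lsc (swapped_conj f)"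
proof (rule ext_lscI_real)
  fix r
  have "closed {z. ereal (coupling w z) - f w \<le> ereal r}" for w
  proof (cases "f w")
    case (real F)
    have "{z. ereal (coupling w z) - f w \<le> ereal r} = {z. coupling w z - F \<le> r}"
      using real by auto
    also have "closed \<dots>"
      by (intro closed_Collect_le continuous_intros continuous_on_coupling)
    finally show ?thesis .
  qed auto
  then show "closed {z. swapped_conj f z \<le> ereal r}"
    unfolding swapped_conj_le_iff by (simp add: Collect_all_eq closed_INT)
qed

subsection \<open>Fitzpatrick functions\<close>

lemma fitz_familyD:
  assumes "h \<in> fitz_family T"
  shows "\<And>z. h z \<noteq> -\<infinity>" "ext_convex h" "ext_lsc h" "\<And>z. ereal (self_pair z) \<le> h z"
    "\<And>x xs. xs \<in> T x \<Longrightarrow> h (x, xs) = ereal (self_pair (x, xs))"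
  using assms unfolding fitz_family_def self_pair_def by auto

lemma fitz_familyI:
  assumes "\<And>z. ereal (self_pair z) \<le> f z" "ext_convex f" "ext_lsc f"
    "\<And>x xs. xs \<in> T x \<Longrightarrow> f (x, xs) \<le> ereal (self_pair (x, xs))"
  shows "f \<in> fitz_family T"
  unfolding fitz_family_def
proof safe
  fix z assume "f z = -\<infinity>" then show False using assms(1)[of z] by simp
next
  fix x xs show "ereal (pair x xs) \<le> f (x, xs)"
    using assms(1)[of "(x, xs)"] by (simp add: self_pair_def)
next
  fix x xs assume "xs \<in> T x" then show "f (x, xs) = ereal (pair x xs)"
    using assms(1)[of "(x, xs)"] assms(4)[of xs x] by (simp add: self_pair_def antisym)
qed (use assms in auto)

lemma not_minf_if_above:
  assumes "\<And>z. ereal (p z) \<le> f z" shows "f z \<noteq> -\<infinity>"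
  using assms[of z] by auto

text \<open>Convexity along the segment from a graph point \<open>z\<^sub>0\<close>, where \<open>h\<close> touches the
  duality product, to \<open>w\<close>; the quadratic term in \<open>t\<close> vanishes as \<open>t \<rightarrow> 0\<close>.\<close>

lemma coupling_le_fitz:
  assumes hH: "h \<in> fitz_family T" and graph: "xs \<in> T x"
  shows "ereal (coupling (x, xs) w - self_pair (x, xs)) \<le> h w"
proof (cases "h w")
  case (real H)
  define z\<^sub>0 where "z\<^sub>0 = (x, xs)"
  have hz\<^sub>0: "h z\<^sub>0 = ereal (self_pair z\<^sub>0)"
    using fitz_familyD(5)[OF hH graph] by (simp add: z\<^sub>0_def)
  have "coupling z\<^sub>0 w - self_pair z\<^sub>0 + t * (self_pair z\<^sub>0 + self_pair w - coupling z\<^sub>0 w) \<le> H"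
    if t: "0 < t" "t \<le> 1" for t
  proof -
    have "ereal (self_pair ((1 - t) *\<^sub>R z\<^sub>0 + t *\<^sub>R w)) \<le> h ((1 - t) *\<^sub>R z\<^sub>0 + t *\<^sub>R w)"
      by (rule fitz_familyD(4)[OF hH])
    also have "\<dots> \<le> ereal ((1 - t) * self_pair z\<^sub>0 + t * H)"
      using t hz\<^sub>0 real by (intro ext_convexD_real[OF fitz_familyD(2)[OF hH]]) auto
    finally have "(1 - t)\<^sup>2 * self_pair z\<^sub>0 + t\<^sup>2 * self_pair w + t * (1 - t) * coupling z\<^sub>0 w
        \<le> (1 - t) * self_pair z\<^sub>0 + t * H"
      by (simp add: self_pair_convex_comb)
    then have "t * (coupling z\<^sub>0 w - self_pair z\<^sub>0 + t * (self_pair z\<^sub>0 + self_pair w - coupling z\<^sub>0 w))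
        \<le> t * H"
      by (simp add: algebra_simps power2_eq_square)
    then show ?thesis using t by simp
  qed
  then have "coupling z\<^sub>0 w - self_pair z\<^sub>0 \<le> H" by (rule le_of_forall_small_perturbation)
  then show ?thesis using real by (simp add: z\<^sub>0_def)
qed (use fitz_familyD(1)[OF hH] in auto)

lemma swapped_conj_fitz_on_graph:
  assumes hH: "h \<in> fitz_family T" and graph: "xs \<in> T x"
  shows "swapped_conj h (x, xs) \<le> ereal (self_pair (x, xs))"
proof (rule swapped_conj_leI)
  fix w
  show "ereal (coupling w (x, xs)) - h w \<le> ereal (self_pair (x, xs))"
    using coupling_le_fitz[OF hH graph, of w] by (cases "h w") (auto simp: coupling_commute)
qed

lemma maximal_monotone_memI:
  assumes mm: "maximal_monotone T"
    and monotone_rel: "\<And>y ys. ys \<in> T y \<Longrightarrow> pair (x - y) (xs - ys) \<ge> 0"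
  shows "xs \<in> T x"
proof -
  define S where "S = T(x := insert xs (T x))"
  have pair_swap: "pair (a - b) (as - bs) = pair (b - a) (bs - as)" for a b :: 'a and as bs
    by (simp add: pair_simps algebra_simps)
  have pair_zero: "pair 0 ys = 0" "pair y 0 = 0" for y :: 'a and ys
    by (simp_all add: pair_simps)
  have "monotone_op T" using mm by (simp add: maximal_monotone_def)
  then have "monotone_op S"
    using monotone_rel pair_swap unfolding monotone_op_def S_def by (auto simp: pair_zero)
  moreover have "\<forall>y. T y \<subseteq> S y" by (auto simp: S_def)
  ultimately have "S = T" using mm unfolding maximal_monotone_def by blast
  then show ?thesis by (metis S_def fun_upd_same insertI1)
qed

text \<open>A point where \<open>f\<^sup>* \<circ> i\<close> falls below the duality product would be monotonically
  related to the whole graph of \<open>T\<close>, hence in it by maximality.\<close>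

lemma self_pair_le_swapped_conj:
  assumes mm: "maximal_monotone T"
    and graph_le: "\<And>x xs. xs \<in> T x \<Longrightarrow> f (x, xs) \<le> ereal (self_pair (x, xs))"
  shows "ereal (self_pair z) \<le> swapped_conj f z"
proof (rule ccontr)
  assume below: "\<not> ereal (self_pair z) \<le> swapped_conj f z"
  obtain x xs where z: "z = (x, xs)" by (cases z)
  have "pair (x - y) (xs - ys) \<ge> 0" if graph: "ys \<in> T y" for y ys
  proof -
    have "ereal (coupling (y, ys) z) - f (y, ys) < ereal (self_pair z)"
      using fenchel_young[of "(y, ys)" z f] below by simp
    then have "coupling (y, ys) z - self_pair (y, ys) < self_pair z"
      using graph_le[OF graph] by (cases "f (y, ys)") auto
    then show ?thesis by (simp add: pair_diff_diff z coupling_commute)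
  qed
  then have "xs \<in> T x" by (rule maximal_monotone_memI[OF mm])
  then have "f z \<le> ereal (self_pair z)" unfolding z by (rule graph_le)
  then have "ereal (self_pair z) \<le> ereal (coupling z z) - f z"
    by (cases "f z") (auto simp: coupling_self)
  also have "\<dots> \<le> swapped_conj f z" by (rule fenchel_young)
  finally show False using below by simp
qed

subsection \<open>Enlargements \<open>L\<^sup>g\<close>\<close>

lemma Lenl_additive:
  assumes not_minf: "\<And>z. f z \<noteq> -\<infinity>" and dom: "\<And>z. swapped_conj f z \<le> f z"
  shows "additive_enl (Lenl f)"
  unfolding additive_enl_def
proof (intro allI impI)
  fix e\<^sub>1 e\<^sub>2 :: real and x y :: 'a and xs ys
  assume "xs \<in> Lenl f e\<^sub>1 x" and y: "ys \<in> Lenl f e\<^sub>2 y"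
  then have x: "f (x, xs) \<le> ereal (self_pair (x, xs) + e\<^sub>1)"
    by (simp add: Lenl_def self_pair_def)
  have "ereal (coupling (x, xs) (y, ys)) - f (x, xs) \<le> swapped_conj f (y, ys)" by (rule fenchel_young)
  also have "\<dots> \<le> f (y, ys)" by (rule dom)
  also have "\<dots> \<le> ereal (self_pair (y, ys) + e\<^sub>2)" using y by (simp add: Lenl_def self_pair_def)
  finally have "coupling (x, xs) (y, ys) \<le> self_pair (x, xs) + e\<^sub>1 + self_pair (y, ys) + e\<^sub>2"
    using x not_minf[of "(x, xs)"] by (cases "f (x, xs)") auto
  then show "- (e\<^sub>1 + e\<^sub>2) \<le> pair (x - y) (xs - ys)" by (simp add: pair_diff_diff)
qed

lemma Lenl_le_of_subset:
  assumes above: "\<And>z. ereal (self_pair z) \<le> g z"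
    and sub: "\<And>\<epsilon> x. \<epsilon> \<ge> 0 \<Longrightarrow> Lenl g \<epsilon> x \<subseteq> Lenl f \<epsilon> x"
  shows "f z \<le> g z"
proof (cases "g z")
  case (real G)
  obtain x xs where z: "z = (x, xs)" by (cases z)
  have "G - self_pair z \<ge> 0" using above[of z] real by simp
  moreover have "xs \<in> Lenl g (G - self_pair z) x" using real by (simp add: Lenl_def z self_pair_def)
  ultimately have "xs \<in> Lenl f (G - self_pair z) x" using sub by blast
  then show ?thesis using real by (simp add: Lenl_def z self_pair_def)
qed (use above[of z] in auto)

lemma Lenl_subset_of_le: "(\<And>z. f z \<le> g z) \<Longrightarrow> Lenl g \<epsilon> x \<subseteq> Lenl f \<epsilon> x"
  unfolding Lenl_def using order_trans by blast

lemma Lenl_inject: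
  assumes "\<And>z. ereal (self_pair z) \<le> f z" "\<And>z. ereal (self_pair z) \<le> g z"
    and "\<And>\<epsilon> x. \<epsilon> \<ge> 0 \<Longrightarrow> Lenl f \<epsilon> x = Lenl g \<epsilon> x"
  shows "f = g"
  using Lenl_le_of_subset[of f g] Lenl_le_of_subset[of g f] assms by (auto intro!: ext antisym)

lemma max_additive_LenlI:
  assumes gH: "g \<in> fitz_family T" and self_conj: "swapped_conj g = g"
  shows "max_additive T (Lenl g)"
  unfolding max_additive_def
proof (intro conjI allI impI)
  show "is_enlargement T (Lenl g)" unfolding is_enlargement_def using gH by blast
  show "additive_enl (Lenl g)"
    using Lenl_additive fitz_familyD(1)[OF gH] self_conj by (metis order_refl)
  fix E' and \<epsilon> :: real and x
  assume "is_enlargement T E' \<and> additive_enl E' \<and> (\<forall>\<epsilon>\<ge>0. \<forall>x. Lenl g \<epsilon> x \<subseteq> E' \<epsilon> x)"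
  then obtain g' where E': "\<forall>\<epsilon>\<ge>0. \<forall>x. E' \<epsilon> x = Lenl g' \<epsilon> x" and addE: "additive_enl E'"
    and sub: "\<forall>\<epsilon>\<ge>0. \<forall>x. Lenl g \<epsilon> x \<subseteq> E' \<epsilon> x"
    unfolding is_enlargement_def by blast
  assume e: "\<epsilon> \<ge> 0"
  have "E' \<epsilon> x \<subseteq> Lenl g \<epsilon> x"
  proof
    fix xs assume xs: "xs \<in> E' \<epsilon> x"
    have "swapped_conj g (x, xs) \<le> ereal (self_pair (x, xs) + \<epsilon>)"
    proof (rule swapped_conj_leI)
      fix w
      show "ereal (coupling w (x, xs)) - g w \<le> ereal (self_pair (x, xs) + \<epsilon>)"
      proof (cases "g w")
        case (real G)
        obtain y ys where w: "w = (y, ys)" by (cases w)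
        have e': "G - self_pair w \<ge> 0" using fitz_familyD(4)[OF gH, of w] real by simp
        have "ys \<in> Lenl g (G - self_pair w) y" using real by (simp add: Lenl_def w self_pair_def)
        then have "ys \<in> E' (G - self_pair w) y" using sub e' by blast
        then have "pair (y - x) (ys - xs) \<ge> - ((G - self_pair w) + \<epsilon>)"
          using addE e' e xs unfolding additive_enl_def by blast
        then show ?thesis using real by (simp add: pair_diff_diff w)
      qed (use fitz_familyD(1)[OF gH, of w] in auto)
    qed
    then show "xs \<in> Lenl g \<epsilon> x" using self_conj by (simp add: Lenl_def self_pair_def)
  qed
  then show "Lenl g \<epsilon> x = E' \<epsilon> x" using sub e by blast
qed

subsection \<open>Lowering a self-dominating Fitzpatrick function\<close>

lemma swapped_conj_le_fun_upd:
  assumes dom: "\<And>z. swapped_conj g z \<le> g z"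
    and c: "swapped_conj g z\<^sub>0 \<le> ereal c" "self_pair z\<^sub>0 \<le> c"
  shows "swapped_conj (g(z\<^sub>0 := ereal c)) z \<le> (g(z\<^sub>0 := ereal c)) z"
proof (rule swapped_conj_leI)
  fix w
  have "ereal (coupling w z) - g w \<le> g z" if "z \<noteq> z\<^sub>0"
    using fenchel_young[of w z g] dom[of z] by (rule order_trans)
  moreover have "ereal (coupling z\<^sub>0 z) - ereal c \<le> g z"
    using ereal_minus_mono[OF order_refl c(1)] fenchel_young_swap[of z\<^sub>0 z g] by (rule order_trans)
  moreover have "ereal (coupling w z\<^sub>0) - g w \<le> ereal c"
    using fenchel_young[of w z\<^sub>0 g] c(1) by (rule order_trans)
  ultimately show "ereal (coupling w z) - (g(z\<^sub>0 := ereal c)) w \<le> (g(z\<^sub>0 := ereal c)) z"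
    using c(2) by (auto simp: coupling_self)
qed

text \<open>The biconjugate makes a self-dominating function convex and lower semicontinuous
  without destroying self-domination: \<open>f\<^sup>* \<le> f\<^sup>*\<^sup>* \<le> f\<close>.\<close>

lemma swapped_biconj_fitz:
  assumes mm: "maximal_monotone T"
    and graph_le: "\<And>x xs. xs \<in> T x \<Longrightarrow> f (x, xs) \<le> ereal (self_pair (x, xs))"
    and dom: "\<And>z. swapped_conj f z \<le> f z"
  defines "f' \<equiv> swapped_conj (swapped_conj f)"
  shows "f' \<in> fitz_family T" "\<And>z. swapped_conj f' z \<le> f' z" "\<And>z. f' z \<le> f z"
proof -
  have conj_above: "ereal (self_pair z) \<le> swapped_conj f z" for z
    by (rule self_pair_le_swapped_conj[OF mm graph_le])
  have conj_le: "swapped_conj f z \<le> f' z" for z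
    unfolding f'_def by (rule swapped_conj_antimono[OF dom])
  show le: "f' z \<le> f z" for z
    unfolding f'_def by (rule swapped_biconj_le)
  show "swapped_conj f' z \<le> f' z" for z
    unfolding f'_def using swapped_biconj_le conj_le[unfolded f'_def] by (rule order_trans)
  show "f' \<in> fitz_family T"
  proof (rule fitz_familyI)
    show "ereal (self_pair z) \<le> f' z" for z using conj_above conj_le by (rule order_trans)
    show "ext_convex f'"
      unfolding f'_def by (intro swapped_conj_convex not_minf_if_above[OF conj_above])
    show "ext_lsc f'" unfolding f'_def by (rule swapped_conj_lsc)
    show "f' (x, xs) \<le> ereal (self_pair (x, xs))" if "xs \<in> T x" for x xs
      using le graph_le[OF that] by (rule order_trans)
  qed
qed

lemma fitz_strictly_lower:
  assumes mm: "maximal_monotone T" and gH: "g \<in> fitz_family T"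
    and dom: "\<And>z. swapped_conj g z \<le> g z" and strict: "swapped_conj g z\<^sub>0 < g z\<^sub>0"
  obtains g' where "g' \<in> fitz_family T" "\<And>z. swapped_conj g' z \<le> g' z"
    "\<And>z. g' z \<le> g z" "g' z\<^sub>0 < g z\<^sub>0"
proof -
  have conj_above: "ereal (self_pair z\<^sub>0) \<le> swapped_conj g z\<^sub>0"
    by (rule self_pair_le_swapped_conj[OF mm]) (simp add: fitz_familyD(5)[OF gH])
  then obtain c where c: "swapped_conj g z\<^sub>0 = ereal c" "self_pair z\<^sub>0 \<le> c"
    using strict by (cases "swapped_conj g z\<^sub>0") auto
  define f where "f = g(z\<^sub>0 := ereal c)"
  have f_le: "f z \<le> g z" for z using strict c by (auto simp: f_def)
  have f_less: "f z\<^sub>0 < g z\<^sub>0" using strict c by (simp add: f_def)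
  have f_graph: "f (x, xs) \<le> ereal (self_pair (x, xs))" if "xs \<in> T x" for x xs
    using f_le[of "(x, xs)"] fitz_familyD(5)[OF gH that] by simp
  have f_dom: "swapped_conj f z \<le> f z" for z
    unfolding f_def using dom c by (intro swapped_conj_le_fun_upd) auto
  note f' = swapped_biconj_fitz[OF mm f_graph f_dom]
  show thesis
  proof (rule that[OF f'(1,2)])
    show "swapped_conj (swapped_conj f) z \<le> g z" for z using f'(3) f_le by (rule order_trans)
    show "swapped_conj (swapped_conj f) z\<^sub>0 < g z\<^sub>0" using f'(3) f_less by (rule order.strict_trans1)
  qed
qed

lemma max_additive_Lenl_imp_self_conj:
  assumes mm: "maximal_monotone T" and gH: "g \<in> fitz_family T"
    and dom: "\<And>z. swapped_conj g z \<le> g z" and max: "max_additive T (Lenl g)"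
  shows "swapped_conj g = g"
proof (rule ext, rule antisym[OF dom], rule ccontr)
  fix z\<^sub>0 assume "\<not> g z\<^sub>0 \<le> swapped_conj g z\<^sub>0"
  then have "swapped_conj g z\<^sub>0 < g z\<^sub>0" by simp
  then obtain g' where g'H: "g' \<in> fitz_family T" and g'dom: "\<And>z. swapped_conj g' z \<le> g' z"
    and g'_le: "\<And>z. g' z \<le> g z" and g'_less: "g' z\<^sub>0 < g z\<^sub>0"
    using fitz_strictly_lower[OF mm gH dom] by blast
  have "is_enlargement T (Lenl g')" unfolding is_enlargement_def using g'H by blast
  moreover have "additive_enl (Lenl g')"
    by (rule Lenl_additive[OF fitz_familyD(1)[OF g'H] g'dom])
  moreover have "\<forall>\<epsilon>\<ge>0. \<forall>x. Lenl g \<epsilon> x \<subseteq> Lenl g' \<epsilon> x"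
    using Lenl_subset_of_le[of g' g] g'_le by blast
  ultimately have "Lenl g \<epsilon> x = Lenl g' \<epsilon> x" if "\<epsilon> \<ge> 0" for \<epsilon> x
    using max that unfolding max_additive_def by blast
  then have "g = g'" by (intro Lenl_inject fitz_familyD(4)[OF gH] fitz_familyD(4)[OF g'H])
  with g'_less show False by simp
qed

subsection \<open>The average \<open>\<A>h\<close>\<close>

lemma avg_op_eq: "avg_op h = (\<lambda>z. (h z + swapped_conj h z) / 2)"
  by (simp add: avg_op_def swapped_conj_def)

lemma avg_op_self_conj:
  assumes "\<And>z. h z \<noteq> -\<infinity>" "swapped_conj h = h"
  shows "avg_op h = h"
proof
  fix z show "avg_op h z = h z"
    unfolding avg_op_eq using assms by (cases "h z") auto
qed

context
  fixes T :: "'a::real_normed_vector \<Rightarrow> ('a \<Rightarrow>\<^sub>L real) set" and h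
  assumes mm: "maximal_monotone T" and hH: "h \<in> fitz_family T"
begin

lemma swapped_conj_fitz_above: "ereal (self_pair z) \<le> swapped_conj h z"
  by (rule self_pair_le_swapped_conj[OF mm]) (simp add: fitz_familyD(5)[OF hH])

lemma swapped_conj_fitz_not_minf: "swapped_conj h z \<noteq> -\<infinity>"
  using swapped_conj_fitz_above[of z] by auto

lemma avg_op_fitz: "avg_op h \<in> fitz_family T"
  unfolding avg_op_eq
proof (rule fitz_familyI)
  show "ereal (self_pair z) \<le> (h z + swapped_conj h z) / 2" for z
    using swapped_conj_fitz_above[of z] fitz_familyD(4)[OF hH, of z]
    by (cases "h z"; cases "swapped_conj h z") auto
  show "(h (x, xs) + swapped_conj h (x, xs)) / 2 \<le> ereal (self_pair (x, xs))" if "xs \<in> T x" for x xs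
    using swapped_conj_fitz_on_graph[OF hH that] fitz_familyD(5)[OF hH that]
      swapped_conj_fitz_not_minf[of "(x, xs)"]
    by (cases "swapped_conj h (x, xs)") auto
  show "ext_convex (\<lambda>z. (h z + swapped_conj h z) / 2)"
    by (intro ext_convex_half_sum fitz_familyD(1,2)[OF hH] swapped_conj_convex
        swapped_conj_fitz_not_minf)
  show "ext_lsc (\<lambda>z. (h z + swapped_conj h z) / 2)"
    by (intro ext_lsc_half_sum fitz_familyD(1,3)[OF hH] swapped_conj_lsc swapped_conj_fitz_not_minf)
qed

lemma swapped_conj_avg_op_le: "swapped_conj (avg_op h) z \<le> avg_op h z"
proof (rule swapped_conj_leI)
  fix w
  have fy: "ereal (coupling w z) - h w \<le> swapped_conj h z" "ereal (coupling z w) - h z \<le> swapped_conj h w"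
    by (rule fenchel_young)+
  note not_minf = swapped_conj_fitz_not_minf[of w] swapped_conj_fitz_not_minf[of z]
    fitz_familyD(1)[OF hH, of w] fitz_familyD(1)[OF hH, of z]
  show "ereal (coupling w z) - avg_op h w \<le> avg_op h z"
  proof (cases "h w = \<infinity> \<or> swapped_conj h w = \<infinity> \<or> h z = \<infinity> \<or> swapped_conj h z = \<infinity>")
    case True
    then show ?thesis using not_minf unfolding avg_op_eq
      by (cases "h w"; cases "swapped_conj h w"; cases "h z"; cases "swapped_conj h z") auto
  next
    case False
    then obtain a b c d where "h w = ereal a" "swapped_conj h w = ereal b"
      "h z = ereal c" "swapped_conj h z = ereal d"
      using not_minf by (cases "h w"; cases "swapped_conj h w"; cases "h z"; cases "swapped_conj h z") auto
    then show ?thesis using fy unfolding avg_op_eq by (simp add: coupling_commute field_simps)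
  qed
qed

lemma breve_eq_Lenl_avg_op: "breve h = Lenl (avg_op h)"
proof (intro ext set_eqI)
  fix \<epsilon> :: real and x :: 'a and xs :: "'a \<Rightarrow>\<^sub>L real"
  define z where "z = (x, xs)"
  have shift: "pair (a - x) xs + pair x (b - xs) = coupling (a, b) z - 2 * self_pair z" for a b
    by (simp add: coupling_def self_pair_def pair_simps z_def)
  show "xs \<in> breve h \<epsilon> x \<longleftrightarrow> xs \<in> Lenl (avg_op h) \<epsilon> x"
  proof (cases "h z")
    case (real H)
    have "xs \<in> breve h \<epsilon> x
        \<longleftrightarrow> (\<forall>w. ereal H + ereal (coupling w z - 2 * self_pair z) - ereal (2 * \<epsilon>) \<le> h w)"
      using real unfolding z_def by (simp add: breve_def eps_subdiff_def shift[unfolded z_def])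
    also have "\<dots> \<longleftrightarrow> (\<forall>w. ereal (coupling w z) - h w \<le> ereal (2 * self_pair z + 2 * \<epsilon> - H))"
      using fitz_familyD(1)[OF hH] by (intro all_cong1, case_tac "h w") (auto simp: algebra_simps)
    also have "\<dots> \<longleftrightarrow> swapped_conj h z \<le> ereal (2 * self_pair z + 2 * \<epsilon> - H)"
      by (simp add: swapped_conj_le_iff)
    also have "\<dots> \<longleftrightarrow> avg_op h z \<le> ereal (self_pair z + \<epsilon>)"
      unfolding avg_op_eq using real swapped_conj_fitz_not_minf[of z]
      by (cases "swapped_conj h z") (auto simp: algebra_simps)
    finally show ?thesis by (simp add: Lenl_def z_def self_pair_def)
  next
    case PInf
    then show ?thesis using swapped_conj_fitz_not_minf[of z]
      by (simp add: breve_def eps_subdiff_def Lenl_def avg_op_eq z_def[symmetric])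
  qed (use fitz_familyD(1)[OF hH, of z] in simp)
qed

end

theorem corollary3p5:
  fixes T :: "'a::banach \<Rightarrow> ('a \<Rightarrow>\<^sub>L real) set"
    and h :: "'a \<times> ('a \<Rightarrow>\<^sub>L real) \<Rightarrow> ereal"
  assumes "reflexive_space TYPE('a)"
    and "maximal_monotone T"
    and "h \<in> fitz_family T"
  shows "additive_enl (breve h)
    \<and> (max_additive T (breve h) \<longleftrightarrow> fenchel_conj (avg_op h) \<circ> iswap = avg_op h)
    \<and> (fenchel_conj h \<circ> iswap = h \<longrightarrow> max_additive T (breve h))"
proof -
  note mm = assms(2) and hH = assms(3)
  let ?g = "avg_op h"
  have gH: "?g \<in> fitz_family T" by (rule avg_op_fitz[OF mm hH])
  have dom: "\<And>z. swapped_conj ?g z \<le> ?g z" by (rule swapped_conj_avg_op_le[OF mm hH])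
  have breve: "breve h = Lenl ?g" by (rule breve_eq_Lenl_avg_op[OF mm hH])
  have "additive_enl (breve h)"
    unfolding breve by (rule Lenl_additive[OF fitz_familyD(1)[OF gH] dom])
  moreover have "max_additive T (breve h) \<longleftrightarrow> swapped_conj ?g = ?g"
    unfolding breve using max_additive_LenlI[OF gH] max_additive_Lenl_imp_self_conj[OF mm gH dom]
    by blast
  moreover have "swapped_conj ?g = ?g" if "swapped_conj h = h"
    using avg_op_self_conj[OF fitz_familyD(1)[OF hH] that] that by simp
  ultimately show ?thesis unfolding swapped_conj_def[symmetric] by blast
qed

end
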